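(* Let $(Y,\lambda)\in\{-1,1\}\times\{-1,1\}^m$ follow the Ising model $$P(Y,\lambda)=\frac1Z\exp\Big(\theta_Y Y+\sum_k\theta_k\lambda_kY+\sum_{(k,l)\in E_\lambda}\theta_{kl}\lambda_k\lambda_l\Big),$$ where $E_\lambda$ is a set of unordered pairs of distinct sources, each source in at most one pair. Let $(i,j)\in E_\lambda$. Then $$\varepsilon_{ij}:=\mathbb E[\lambda_i\lambda_j]-\mathbb E[\lambda_iY]\mathbb E[\lambda_jY]=\Delta_{ij}-\Delta_ia_j'-\Delta_ja_i'-\Delta_i\Delta_j,$$ where $$z_{ij}=\sum_{s_i,s_j\in\{\pm1\}}\exp(s_i\theta_i+s_j\theta_j+s_is_j\theta_{ij}),\qquad z'_{ij}=\sum_{s_i,s_j\in\{\pm1\}}\exp(s_i\theta_i+s_j\theta_j),$$ $$\Delta_i=\frac{2}{z_{ij}z'_{ij}}(e^{\theta_{ij}}-e^{-\theta_{ij}})(e^{2\theta_j}-e^{-2\theta_j}),\qquad \Delta_j=\frac{2}{z_{ij}z'_{ij}}(e^{\theta_{ij}}-e^{-\theta_{ij}})(e^{2\theta_i}-e^{-2\theta_i}),$$ $$\Delta_{ij}=\frac{2}{z_{ij}z'_{ij}}(e^{\theta_{ij}}-e^{-\theta_{ij}})(e^{2\theta_i}+e^{-2\theta_i}+e^{2\theta_j}+e^{-2\theta_j}),$$ $$a_i'=\frac{2}{z'_{ij}}e^{\theta_i}(e^{\theta_j}+e^{-\theta_j})-1,\qquad a_j'=\frac{2}{z'_{ij}}e^{\theta_j}(e^{\theta_i}+e^{-\theta_i})-1.$$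 Moreover, $\varepsilon_{ij}\in(0,1)$ if $\theta_i,\theta_j,\theta_{ij}>0$.
   Context: $Z$ is the normalizing constant. *)

theory Defs
  imports "HOL-Analysis.Analysis"
begin

text \<open>Sources are indexed by 0..m-1. An outcome is a pair (Y, lam) with Y in {-1,1}
  and lam a {-1,1}-valued vector on {..<m} (extensional: undefined outside).
  Unordered pairs of sources are 2-element sets; the pair parameter theta_kl is
  a function of the unordered pair {k,l}.\<close>

definition ising_space :: "nat \<Rightarrow> (real \<times> (nat \<Rightarrow> real)) set" where
  "ising_space m = {-1, 1} \<times> PiE {..<m} (\<lambda>_. {-1, 1})"

definition ising_weight ::
  "nat \<Rightarrow> real \<Rightarrow> (nat \<Rightarrow> real) \<Rightarrow> (nat set \<Rightarrow> real) \<Rightarrow> nat set set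
   \<Rightarrow> real \<times> (nat \<Rightarrow> real) \<Rightarrow> real" where
  "ising_weight m thY th thE E \<omega> =
     exp (thY * fst \<omega> + (\<Sum>k<m. th k * snd \<omega> k * fst \<omega>)
          + (\<Sum>e\<in>E. thE e * (\<Prod>k\<in>e. snd \<omega> k)))"

definition ising_Z ::
  "nat \<Rightarrow> real \<Rightarrow> (nat \<Rightarrow> real) \<Rightarrow> (nat set \<Rightarrow> real) \<Rightarrow> nat set set \<Rightarrow> real" where
  "ising_Z m thY th thE E = (\<Sum>\<omega>\<in>ising_space m. ising_weight m thY th thE E \<omega>)"

definition ising_expect ::
  "nat \<Rightarrow> real \<Rightarrow> (nat \<Rightarrow> real) \<Rightarrow> (nat set \<Rightarrow> real) \<Rightarrow> nat set set
   \<Rightarrow> (real \<times> (nat \<Rightarrow> real) \<Rightarrow> real) \<Rightarrow> real" where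
  "ising_expect m thY th thE E f =
     (\<Sum>\<omega>\<in>ising_space m. ising_weight m thY th thE E \<omega> * f \<omega>) / ising_Z m thY th thE E"

definition pair_set :: "nat \<Rightarrow> nat set set \<Rightarrow> bool" where
  "pair_set m E \<longleftrightarrow>
     (\<forall>e\<in>E. \<exists>k l. k < m \<and> l < m \<and> k \<noteq> l \<and> e = {k, l}) \<and>
     (\<forall>e\<in>E. \<forall>e'\<in>E. e \<noteq> e' \<longrightarrow> e \<inter> e' = {})"

end

theory Submission
  imports Defs
begin

text \<open>Write s_k = Y lambda_k. Flipping lambda_i is an involution of the configuration space
  that negates s_i, keeps s_j, and, since i lies in no pair of E other than {i, j}, multiplies
  the weight by exp (-2 theta_i s_i - 2 theta_ij s_i s_j). Hence the law of (s_i, s_j) is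
  proportional to exp (theta_i s_i + theta_j s_j + theta_ij s_i s_j), whatever the rest of the
  model. As lambda_i lambda_j = s_i s_j and lambda_i Y = s_i, eps_ij is the covariance of two
  spins with these four weights, namely 4 (e^(2 theta_ij) - e^(-2 theta_ij)) / z_ij^2; the
  closed form and the bounds are algebra about this expression.\<close>

definition aligned :: "nat \<Rightarrow> real \<times> (nat \<Rightarrow> real) \<Rightarrow> real" where
  "aligned k \<omega> = fst \<omega> * snd \<omega> k"

definition flip_source :: "nat \<Rightarrow> real \<times> (nat \<Rightarrow> real) \<Rightarrow> real \<times> (nat \<Rightarrow> real)" where
  "flip_source k \<omega> = (fst \<omega>, (snd \<omega>)(k := - snd \<omega> k))"

lemma pair_set_elemE:
  assumes "pair_set m E" "e \<in> E"
  obtains k l where "k < m" "l < m" "k \<noteq> l" "e = {k, l}"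
  using assms unfolding pair_set_def by meson

lemma pair_set_memberD:
  assumes "pair_set m E" "{i, j} \<in> E"
  shows "i < m" "j < m"
proof -
  obtain k l where "k < m" "l < m" "{i, j} = {k, l}"
    by (rule pair_set_elemE[OF assms])
  moreover have "i \<in> {i, j}" "j \<in> {i, j}" by simp_all
  ultimately show "i < m" "j < m" by auto
qed

lemma pair_set_disjoint:
  assumes "pair_set m E" "{i, j} \<in> E" "e \<in> E" "e \<noteq> {i, j}"
  shows "i \<notin> e"
proof -
  have "e \<inter> {i, j} = {}"
    using assms unfolding pair_set_def by simp
  then show ?thesis by blast
qed

lemma pair_set_finite:
  assumes "pair_set m E"
  shows "finite E"
proof (rule finite_subset)
  show "E \<subseteq> Pow {..<m}"
    using pair_set_elemE[OF assms] by blast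
qed simp

lemma finite_ising_space: "finite (ising_space m)"
  unfolding ising_space_def by (simp add: finite_PiE)

lemma ising_space_nonempty: "ising_space m \<noteq> {}"
proof -
  have "(1, \<lambda>k\<in>{..<m}. 1) \<in> ising_space m"
    unfolding ising_space_def by auto
  then show ?thesis by blast
qed

lemma mem_ising_space:
  "\<omega> \<in> ising_space m \<longleftrightarrow> fst \<omega> \<in> {-1, 1} \<and> snd \<omega> \<in> PiE {..<m} (\<lambda>_. {-1, 1})"
  unfolding ising_space_def by (rule mem_Times_iff)

lemma ising_spaceD:
  assumes "\<omega> \<in> ising_space m"
  shows "fst \<omega> \<in> {-1, 1}" and "k < m \<Longrightarrow> snd \<omega> k \<in> {-1, 1}"
proof -
  have \<omega>: "fst \<omega> \<in> {-1, 1} \<and> snd \<omega> \<in> PiE {..<m} (\<lambda>_. {-1, 1})"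
    using assms unfolding mem_ising_space .
  then show "fst \<omega> \<in> {-1, 1}" ..
  show "snd \<omega> k \<in> {-1, 1}" if "k < m"
    using PiE_mem[OF conjunct2[OF \<omega>], of k] that by simp
qed

lemma aligned_ising_space:
  assumes "\<omega> \<in> ising_space m" "k < m"
  shows "aligned k \<omega> \<in> {-1, 1}"
  using ising_spaceD[OF assms(1)] assms(2) unfolding aligned_def by fastforce

lemma fst_flip_source [simp]: "fst (flip_source k \<omega>) = fst \<omega>"
  unfolding flip_source_def by simp

lemma flip_source_flip_source [simp]: "flip_source k (flip_source k \<omega>) = \<omega>"
  unfolding flip_source_def by simp

lemma flip_source_ising_space:
  assumes "\<omega> \<in> ising_space m" "k < m"
  shows "flip_source k \<omega> \<in> ising_space m"
proof -
  have \<omega>: "fst \<omega> \<in> {-1, 1} \<and> snd \<omega> \<in> PiE {..<m} (\<lambda>_. {-1, 1})"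
    using assms(1) unfolding mem_ising_space .
  have "- snd \<omega> k \<in> {-1, 1}"
    using ising_spaceD(2)[OF assms] by auto
  then have "(snd \<omega>)(k := - snd \<omega> k) \<in> PiE (insert k {..<m}) (\<lambda>_. {-1, 1})"
    using \<omega> by (intro PiE_fun_upd) simp_all
  moreover have "insert k {..<m} = {..<m}"
    using assms(2) by auto
  ultimately show ?thesis
    using \<omega> unfolding mem_ising_space flip_source_def by simp
qed

lemma aligned_flip_source:
  "aligned k (flip_source k \<omega>) = - aligned k \<omega>"
  "l \<noteq> k \<Longrightarrow> aligned l (flip_source k \<omega>) = aligned l \<omega>"
  unfolding aligned_def flip_source_def by simp_all

lemma ising_expect_cong:
  assumes "\<And>\<omega>. \<omega> \<in> ising_space m \<Longrightarrow> f \<omega> = g \<omega>"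
  shows "ising_expect m thY th thE E f = ising_expect m thY th thE E g"
  unfolding ising_expect_def using assms by simp

lemma ising_Z_pos: "ising_Z m thY th thE E > 0"
  unfolding ising_Z_def ising_weight_def
  using finite_ising_space ising_space_nonempty by (intro sum_pos) auto

lemma aligned_mult_aligned:
  assumes "\<omega> \<in> ising_space m"
  shows "aligned i \<omega> * aligned j \<omega> = snd \<omega> i * snd \<omega> j"
proof -
  have "fst \<omega> * fst \<omega> = 1"
    using ising_spaceD(1)[OF assms] by auto
  then show ?thesis
    unfolding aligned_def by (metis mult.assoc mult.left_commute mult_1)
qed

lemma sum_eq_except_one:
  fixes f g :: "'a \<Rightarrow> 'b::ab_group_add"
  assumes "finite A" "a \<in> A" "\<And>x. x \<in> A - {a} \<Longrightarrow> g x = f x"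
  shows "sum g A = sum f A + (g a - f a)"
proof -
  have "sum g A = g a + sum g (A - {a})"
    using assms(1,2) by (rule sum.remove)
  also have "sum g (A - {a}) = sum f (A - {a})"
    using assms(3) by (rule sum.cong[OF refl])
  also have "\<dots> = sum f A - f a"
    using assms(1,2) by (simp add: sum_diff1)
  finally show ?thesis by simp
qed

lemma ising_weight_flip_source:
  assumes P: "pair_set m E" and e: "{i, j} \<in> E" and "i \<noteq> j"
  shows "ising_weight m thY th thE E (flip_source i \<omega>) = ising_weight m thY th thE E \<omega> *
    exp (- 2 * th i * aligned i \<omega> - 2 * thE {i, j} * snd \<omega> i * snd \<omega> j)"
proof -
  let ?Y = "fst \<omega>" and ?l = "snd \<omega>" and ?l' = "snd (flip_source i \<omega>)"
  have field: "(\<Sum>k<m. th k * ?l' k * ?Y) = (\<Sum>k<m. th k * ?l k * ?Y) - 2 * th i * aligned i \<omega>"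
    using pair_set_memberD(1)[OF P e]
    by (subst sum_eq_except_one[where a = i]) (auto simp: flip_source_def aligned_def)
  have "(\<Prod>k\<in>e. ?l' k) = (\<Prod>k\<in>e. ?l k)" if "e \<in> E - {{i, j}}" for e
    using pair_set_disjoint[OF P e, of e] that by (intro prod.cong) (auto simp: flip_source_def)
  then have pair: "(\<Sum>e\<in>E. thE e * (\<Prod>k\<in>e. ?l' k))
      = (\<Sum>e\<in>E. thE e * (\<Prod>k\<in>e. ?l k)) - 2 * thE {i, j} * ?l i * ?l j"
    using pair_set_finite[OF P] e \<open>i \<noteq> j\<close>
    by (subst sum_eq_except_one[where a = "{i, j}"]) (auto simp: flip_source_def)
  show ?thesis
    unfolding ising_weight_def fst_flip_source field pair by (simp add: exp_add[symmetric] algebra_simps)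
qed

definition pair_mass ::
  "nat \<Rightarrow> real \<Rightarrow> (nat \<Rightarrow> real) \<Rightarrow> (nat set \<Rightarrow> real) \<Rightarrow> nat set set
   \<Rightarrow> nat \<Rightarrow> nat \<Rightarrow> real \<Rightarrow> real \<Rightarrow> real" where
  "pair_mass m thY th thE E i j si sj =
     sum (ising_weight m thY th thE E) {\<omega> \<in> ising_space m. aligned i \<omega> = si \<and> aligned j \<omega> = sj}"

definition pair_weight :: "real \<Rightarrow> real \<Rightarrow> real \<Rightarrow> real \<Rightarrow> real \<Rightarrow> real" where
  "pair_weight a b t si sj = exp (si * a + sj * b + si * sj * t)"

lemma pair_mass_swap: "pair_mass m thY th thE E j i sj si = pair_mass m thY th thE E i j si sj"
  unfolding pair_mass_def by (simp add: conj_commute)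

lemma pair_weight_swap: "pair_weight b a t sj si = pair_weight a b t si sj"
  unfolding pair_weight_def by (simp add: algebra_simps)

lemma pair_weight_flip:
  "pair_weight a b t (- si) sj = exp (- 2 * si * a - 2 * si * sj * t) * pair_weight a b t si sj"
  unfolding pair_weight_def by (simp add: exp_add[symmetric] algebra_simps)

lemma pair_mass_flip:
  assumes P: "pair_set m E" and e: "{i, j} \<in> E" and "i \<noteq> j"
  shows "pair_mass m thY th thE E i j (- si) sj =
    exp (- 2 * si * th i - 2 * si * sj * thE {i, j}) * pair_mass m thY th thE E i j si sj"
proof -
  let ?w = "ising_weight m thY th thE E"
  let ?S = "\<lambda>si. {\<omega> \<in> ising_space m. aligned i \<omega> = si \<and> aligned j \<omega> = sj}"
  have i: "i < m"
    using pair_set_memberD[OF P e] by simp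
  have "pair_mass m thY th thE E i j (- si) sj = sum (\<lambda>\<omega>. ?w (flip_source i \<omega>)) (?S si)"
    unfolding pair_mass_def
    by (rule sum.reindex_bij_witness[where i = "flip_source i" and j = "flip_source i"])
      (use i \<open>i \<noteq> j\<close> in \<open>auto simp: flip_source_ising_space aligned_flip_source\<close>)
  also have "\<dots> = sum (\<lambda>\<omega>. exp (- 2 * si * th i - 2 * si * sj * thE {i, j}) * ?w \<omega>) (?S si)"
  proof (rule sum.cong[OF refl])
    fix \<omega> assume "\<omega> \<in> ?S si"
    then have "aligned i \<omega> = si" "snd \<omega> i * snd \<omega> j = si * sj"
      using aligned_mult_aligned[of \<omega> m i j] by auto
    then show "?w (flip_source i \<omega>) = exp (- 2 * si * th i - 2 * si * sj * thE {i, j}) * ?w \<omega>"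
      unfolding ising_weight_flip_source[OF P e \<open>i \<noteq> j\<close>] by (simp add: algebra_simps)
  qed
  finally show ?thesis
    unfolding pair_mass_def by (simp add: sum_distrib_left)
qed

lemma pair_mass_proportional:
  fixes th :: "nat \<Rightarrow> real" and thE :: "nat set \<Rightarrow> real"
  assumes P: "pair_set m E" and e: "{i, j} \<in> E" and "i \<noteq> j"
    and "si \<in> {-1, 1}" "sj \<in> {-1, 1}"
  defines "g \<equiv> pair_weight (th i) (th j) (thE {i, j})"
  shows "pair_mass m thY th thE E i j si sj = pair_mass m thY th thE E i j 1 1 / g 1 1 * g si sj"
proof -
  let ?q = "pair_mass m thY th thE E i j"
  have flip_i: "?q (- s) s' / g (- s) s' = ?q s s' / g s s'" for s s'
    unfolding g_def pair_weight_flip pair_mass_flip[OF P e \<open>i \<noteq> j\<close>] by simp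
  have e': "{j, i} \<in> E"
    using e by (simp only: insert_commute)
  have flip_j: "?q s (- s') / g s (- s') = ?q s s' / g s s'" for s s'
    using pair_mass_flip[OF P e' \<open>i \<noteq> j\<close>[symmetric], where si = s' and sj = s]
    unfolding g_def pair_mass_swap[where i = i and j = j] pair_weight_swap[of "th j" "th i", symmetric] pair_weight_flip
    by (simp add: insert_commute mult.commute)
  have "?q si sj / g si sj = ?q 1 1 / g 1 1"
    using assms(4,5) flip_i[of 1 1] flip_j[of 1 1] flip_i[of 1 "-1"] by auto
  moreover have "g si sj \<noteq> 0"
    unfolding g_def pair_weight_def by simp
  ultimately show ?thesis
    by (simp add: divide_eq_eq)
qed

lemma ising_sum_aligned_pair:
  assumes "i < m" "j < m"
  shows "(\<Sum>\<omega>\<in>ising_space m. ising_weight m thY th thE E \<omega> * f (aligned i \<omega>) (aligned j \<omega>)) =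
    (\<Sum>si\<in>{-1, 1}. \<Sum>sj\<in>{-1, 1}. f si sj * pair_mass m thY th thE E i j si sj)"
proof -
  let ?w = "ising_weight m thY th thE E"
  let ?key = "\<lambda>\<omega>. (aligned i \<omega>, aligned j \<omega>)"
  let ?h = "\<lambda>\<omega>. ?w \<omega> * f (aligned i \<omega>) (aligned j \<omega>)"
  have "sum ?h (ising_space m) = (\<Sum>s\<in>{-1, 1} \<times> {-1, 1}. sum ?h {\<omega> \<in> ising_space m. ?key \<omega> = s})"
    using aligned_ising_space assms by (intro sum.group[symmetric] finite_ising_space) auto
  also have "\<dots> = (\<Sum>s\<in>{-1, 1} \<times> {-1, 1}.
      \<Sum>\<omega>\<in>{\<omega> \<in> ising_space m. ?key \<omega> = s}. ?w \<omega> * f (fst s) (snd s))"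
    by (intro sum.cong) auto
  also have "\<dots> = (\<Sum>s\<in>{-1, 1} \<times> {-1, 1}. f (fst s) (snd s) * pair_mass m thY th thE E i j (fst s) (snd s))"
    unfolding pair_mass_def by (simp add: sum_distrib_left mult.commute)
  finally show ?thesis
    by (simp add: sum.cartesian_product)
qed

lemma ising_expect_aligned_pair:
  fixes th :: "nat \<Rightarrow> real" and thE :: "nat set \<Rightarrow> real"
  assumes P: "pair_set m E" and e: "{i, j} \<in> E" and "i \<noteq> j"
  defines "g \<equiv> pair_weight (th i) (th j) (thE {i, j})"
  shows "ising_expect m thY th thE E (\<lambda>\<omega>. f (aligned i \<omega>) (aligned j \<omega>)) =
    (\<Sum>si\<in>{-1, 1}. \<Sum>sj\<in>{-1, 1}. f si sj * g si sj) / (\<Sum>si\<in>{-1, 1}. \<Sum>sj\<in>{-1, 1}. g si sj)"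
proof -
  define \<kappa> where "\<kappa> = pair_mass m thY th thE E i j 1 1 / g 1 1"
  have mass: "pair_mass m thY th thE E i j si sj = \<kappa> * g si sj"
    if "si \<in> {-1, 1}" "sj \<in> {-1, 1}" for si sj
    using pair_mass_proportional[OF P e \<open>i \<noteq> j\<close> that] unfolding \<kappa>_def g_def by simp
  have weighted:
    "(\<Sum>\<omega>\<in>ising_space m. ising_weight m thY th thE E \<omega> * h (aligned i \<omega>) (aligned j \<omega>)) =
      \<kappa> * (\<Sum>si\<in>{-1, 1}. \<Sum>sj\<in>{-1, 1}. h si sj * g si sj)" for h
  proof -
    have "(\<Sum>\<omega>\<in>ising_space m. ising_weight m thY th thE E \<omega> * h (aligned i \<omega>) (aligned j \<omega>)) =
        (\<Sum>si\<in>{-1, 1}. \<Sum>sj\<in>{-1, 1}. h si sj * pair_mass m thY th thE E i j si sj)"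
      by (rule ising_sum_aligned_pair[OF pair_set_memberD[OF P e]])
    also have "\<dots> = (\<Sum>si\<in>{-1, 1}. \<Sum>sj\<in>{-1, 1}. \<kappa> * (h si sj * g si sj))"
      by (intro sum.cong refl) (simp add: mass)
    finally show ?thesis
      by (simp only: sum_distrib_left)
  qed
  have Z: "ising_Z m thY th thE E = \<kappa> * (\<Sum>si\<in>{-1, 1}. \<Sum>sj\<in>{-1, 1}. g si sj)"
    using weighted[of "\<lambda>_ _. 1"] unfolding ising_Z_def by simp
  then have "\<kappa> \<noteq> 0"
    using ising_Z_pos[of m thY th thE E] by auto
  then show ?thesis
    unfolding ising_expect_def weighted Z by simp
qed

lemma spin_pair_covariance:
  fixes p :: "real \<Rightarrow> real \<Rightarrow> real"
  defines "S \<equiv> (\<Sum>si\<in>{-1, 1}. \<Sum>sj\<in>{-1, 1}. p si sj)"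
  shows "(\<Sum>si\<in>{-1, 1}. \<Sum>sj\<in>{-1, 1}. si * sj * p si sj) / S
      - (\<Sum>si\<in>{-1, 1}. \<Sum>sj\<in>{-1, 1}. si * p si sj) / S
        * ((\<Sum>si\<in>{-1, 1}. \<Sum>sj\<in>{-1, 1}. sj * p si sj) / S)
    = 4 * (p 1 1 * p (-1) (-1) - p 1 (-1) * p (-1) 1) / S\<^sup>2"
proof (cases "S = 0")
  case False
  define a b c d where "a = p 1 1" and "b = p 1 (-1)" and "c = p (-1) 1" and "d = p (-1) (-1)"
  have S: "S = a + b + c + d"
    unfolding S_def a_def b_def c_def d_def by simp
  have "(a - b - c + d) / S - (a + b - c - d) / S * ((a - b + c - d) / S)
      = ((a - b - c + d) * S - (a + b - c - d) * (a - b + c - d)) / S\<^sup>2"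
    using False by (simp add: field_simps power2_eq_square)
  also have "(a - b - c + d) * S - (a + b - c - d) * (a - b + c - d) = 4 * (a * d - b * c)"
    unfolding S by (simp add: algebra_simps)
  finally show ?thesis
    unfolding a_def b_def c_def d_def S_def by (simp add: algebra_simps)
qed simp \<comment> \<open>for S = 0 both sides are 0, as x / 0 = 0\<close>

lemma pair_weight_cross_difference:
  "pair_weight a b t 1 1 * pair_weight a b t (-1) (-1) - pair_weight a b t 1 (-1) * pair_weight a b t (-1) 1
    = exp (2 * t) - exp (- 2 * t)"
  unfolding pair_weight_def by (simp add: exp_add[symmetric])

lemma pair_covariance_bounds:
  fixes a b t :: real
  assumes "t > 0"
  defines "z \<equiv> (\<Sum>si\<in>{-1, 1}. \<Sum>sj\<in>{-1, 1}. pair_weight a b t si sj)"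
  shows "0 < 4 * (exp (2 * t) - exp (- 2 * t)) / z\<^sup>2"
    and "4 * (exp (2 * t) - exp (- 2 * t)) / z\<^sup>2 < 1"
proof -
  define p q r s where "p = pair_weight a b t 1 1" and "q = pair_weight a b t 1 (-1)"
    and "r = pair_weight a b t (-1) 1" and "s = pair_weight a b t (-1) (-1)"
  have "p > 0" "q > 0" "r > 0" "s > 0"
    unfolding p_def q_def r_def s_def pair_weight_def by simp_all
  have z: "z = p + q + r + s"
    unfolding z_def p_def q_def r_def s_def by simp
  have cross: "p * s - q * r = exp (2 * t) - exp (- 2 * t)"
    unfolding p_def q_def r_def s_def by (rule pair_weight_cross_difference)
  have "exp (- 2 * t) < exp (2 * t)"
    using \<open>t > 0\<close> by simp
  moreover have "z > 0"
    unfolding z using \<open>p > 0\<close> \<open>q > 0\<close> \<open>r > 0\<close> \<open>s > 0\<close> by simp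
  ultimately show "0 < 4 * (exp (2 * t) - exp (- 2 * t)) / z\<^sup>2"
    by simp
  have "q * r > 0"
    using \<open>q > 0\<close> \<open>r > 0\<close> by simp
  then have "4 * (exp (2 * t) - exp (- 2 * t)) < 4 * (p * s)"
    unfolding cross[symmetric] by simp
  also have "\<dots> \<le> (p + s)\<^sup>2"
  proof -
    have "(p + s)\<^sup>2 - 4 * (p * s) = (p - s)\<^sup>2"
      by (simp add: power2_eq_square algebra_simps)
    then show ?thesis
      using zero_le_power2[of "p - s"] by linarith
  qed
  also have "\<dots> < z\<^sup>2"
    unfolding z using \<open>p > 0\<close> \<open>q > 0\<close> \<open>r > 0\<close> \<open>s > 0\<close>
    by (intro power_strict_mono) simp_all
  finally show "4 * (exp (2 * t) - exp (- 2 * t)) / z\<^sup>2 < 1"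
    using \<open>z > 0\<close> by simp
qed

lemma pair_covariance_closed_form:
  fixes a b t :: real
  defines "z \<equiv> (\<Sum>si\<in>{-1,1::real}. \<Sum>sj\<in>{-1,1::real}. exp (si * a + sj * b + si * sj * t))"
  defines "z' \<equiv> (\<Sum>si\<in>{-1,1::real}. \<Sum>sj\<in>{-1,1::real}. exp (si * a + sj * b))"
  defines "Di \<equiv> 2 / (z * z') * (exp t - exp (- t)) * (exp (2 * b) - exp (- 2 * b))"
  defines "Dj \<equiv> 2 / (z * z') * (exp t - exp (- t)) * (exp (2 * a) - exp (- 2 * a))"
  defines "Dij \<equiv> 2 / (z * z') * (exp t - exp (- t)) *
                   (exp (2 * a) + exp (- 2 * a) + exp (2 * b) + exp (- 2 * b))"
  defines "ai \<equiv> 2 / z' * exp a * (exp b + exp (- b)) - 1"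
  defines "aj \<equiv> 2 / z' * exp b * (exp a + exp (- a)) - 1"
  shows "Dij - Di * aj - Dj * ai - Di * Dj = 4 * (exp (2 * t) - exp (- 2 * t)) / z\<^sup>2"
proof -
  define X Y U where "X = exp a" and "Y = exp b" and "U = exp t"
  have pos: "X > 0" "Y > 0" "U > 0"
    unfolding X_def Y_def U_def by simp_all
  have exp_X: "exp (- a) = 1 / X" "exp (2 * a) = X\<^sup>2" "exp (- 2 * a) = 1 / X\<^sup>2"
    and exp_Y: "exp (- b) = 1 / Y" "exp (2 * b) = Y\<^sup>2" "exp (- 2 * b) = 1 / Y\<^sup>2"
    and exp_U: "exp (- t) = 1 / U" "exp (2 * t) = U\<^sup>2" "exp (- 2 * t) = 1 / U\<^sup>2"
    unfolding X_def Y_def U_def by (simp_all add: exp_minus' exp_double)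
  define xm xp ym yp um up where "xm = X - 1 / X" and "xp = X + 1 / X"
    and "ym = Y - 1 / Y" and "yp = Y + 1 / Y" and "um = U - 1 / U" and "up = U + 1 / U"
  have "xp > 0" "yp > 0"
    unfolding xp_def yp_def using pos by (simp_all add: add_pos_pos)
  have z'_eq: "z' = xp * yp"
    unfolding z'_def xp_def yp_def X_def Y_def by (simp add: exp_add exp_minus field_simps)
  have z_eq: "2 * z = up * z' + um * xm * ym"
    unfolding z_def z'_eq xm_def xp_def ym_def yp_def um_def up_def X_def Y_def U_def
    by (simp add: exp_add exp_minus field_simps)
  have "z > 0"
    unfolding z_def by (simp add: add_pos_pos)
  define c where "c = 2 / (z * z') * um"
  have tanh_form: "2 / ((v + 1 / v) * w) * v * w - 1 = (v - 1 / v) / (v + 1 / v)"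
    if "v > 0" "w > 0" for v w :: real
    using that by (simp add: divide_simps add_pos_pos) (smt (verit) zero_le_square)
  have ai_eq: "ai = xm / xp" and aj_eq: "aj = ym / yp"
    unfolding ai_def aj_def z'_eq exp_X exp_Y X_def[symmetric] Y_def[symmetric]
      xm_def xp_def ym_def yp_def
    using tanh_form[of X "Y + 1 / Y"] tanh_form[of Y "X + 1 / X"] pos
    by (simp_all add: add_pos_pos mult.commute)
  have diff_sq: "(v - 1 / v) * (v + 1 / v) = v\<^sup>2 - 1 / v\<^sup>2" for v :: real
    by (simp add: algebra_simps power2_eq_square)
  have Di_eq: "Di = c * (ym * yp)" and Dj_eq: "Dj = c * (xm * xp)"
    unfolding Di_def Dj_def c_def um_def xm_def xp_def ym_def yp_def diff_sq
      exp_X exp_Y exp_U U_def[symmetric]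
    by simp_all
  have Dij_eq: "Dij = c * (xm\<^sup>2 + ym\<^sup>2 + 4)"
    unfolding Dij_def c_def exp_X exp_Y exp_U U_def[symmetric] xm_def ym_def um_def
    using pos by (simp add: field_simps power2_eq_square)
  have linear_part: "Dij - Di * aj - Dj * ai = 4 * c"
    unfolding Dij_eq Di_eq Dj_eq ai_eq aj_eq
    using \<open>xp > 0\<close> \<open>yp > 0\<close> by (simp add: algebra_simps power2_eq_square)
  have quadratic_part: "Di * Dj = 2 * um * xm * ym / z * c"
    unfolding Di_eq Dj_eq c_def z'_eq using \<open>xp > 0\<close> \<open>yp > 0\<close> by (simp add: ac_simps)
  have "Dij - Di * aj - Dj * ai - Di * Dj = c * (4 - 2 * um * xm * ym / z)"
    unfolding linear_part quadratic_part by (simp add: algebra_simps)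
  also have "4 - 2 * um * xm * ym / z = 2 * up * z' / z"
    using z_eq \<open>z > 0\<close> by (simp add: field_simps)
  also have "c * (2 * up * z' / z) = 4 * (um * up) / z\<^sup>2"
    unfolding c_def z'_eq using \<open>z > 0\<close> \<open>xp > 0\<close> \<open>yp > 0\<close> by (simp add: power2_eq_square)
  also have "um * up = exp (2 * t) - exp (- 2 * t)"
    unfolding exp_U um_def up_def by (simp add: algebra_simps power2_eq_square)
  finally show ?thesis .
qed

theorem lemma5:
  fixes m :: nat and thY :: real and th :: "nat \<Rightarrow> real"
    and thE :: "nat set \<Rightarrow> real" and E :: "nat set set" and i j :: nat
  assumes "pair_set m E" and "{i, j} \<in> E" and "i \<noteq> j"
  defines "EE \<equiv> ising_expect m thY th thE E"
  defines "eps \<equiv> EE (\<lambda>\<omega>. snd \<omega> i * snd \<omega> j)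
                 - EE (\<lambda>\<omega>. snd \<omega> i * fst \<omega>) * EE (\<lambda>\<omega>. snd \<omega> j * fst \<omega>)"
  defines "tij \<equiv> thE {i, j}"
  defines "z \<equiv> (\<Sum>si\<in>{-1,1::real}. \<Sum>sj\<in>{-1,1::real}.
                  exp (si * th i + sj * th j + si * sj * tij))"
  defines "z' \<equiv> (\<Sum>si\<in>{-1,1::real}. \<Sum>sj\<in>{-1,1::real}. exp (si * th i + sj * th j))"
  defines "Di \<equiv> 2 / (z * z') * (exp tij - exp (- tij)) * (exp (2 * th j) - exp (- 2 * th j))"
  defines "Dj \<equiv> 2 / (z * z') * (exp tij - exp (- tij)) * (exp (2 * th i) - exp (- 2 * th i))"
  defines "Dij \<equiv> 2 / (z * z') * (exp tij - exp (- tij)) *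
                   (exp (2 * th i) + exp (- 2 * th i) + exp (2 * th j) + exp (- 2 * th j))"
  defines "ai \<equiv> 2 / z' * exp (th i) * (exp (th j) + exp (- th j)) - 1"
  defines "aj \<equiv> 2 / z' * exp (th j) * (exp (th i) + exp (- th i)) - 1"
  shows "eps = Dij - Di * aj - Dj * ai - Di * Dj \<and>
         (th i > 0 \<and> th j > 0 \<and> tij > 0 \<longrightarrow> 0 < eps \<and> eps < 1)"
proof -
  let ?g = "pair_weight (th i) (th j) tij"
  have z_eq: "z = (\<Sum>si\<in>{-1, 1}. \<Sum>sj\<in>{-1, 1}. ?g si sj)"
    unfolding z_def pair_weight_def ..
  have moments: "EE (\<lambda>\<omega>. f (aligned i \<omega>) (aligned j \<omega>)) =
      (\<Sum>si\<in>{-1, 1}. \<Sum>sj\<in>{-1, 1}. f si sj * ?g si sj) / z" for f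
    unfolding EE_def z_eq tij_def by (rule ising_expect_aligned_pair[OF assms(1-3)])
  have "EE (\<lambda>\<omega>. snd \<omega> i * snd \<omega> j) = EE (\<lambda>\<omega>. aligned i \<omega> * aligned j \<omega>)"
    unfolding EE_def by (rule ising_expect_cong) (simp add: aligned_mult_aligned)
  moreover have "EE (\<lambda>\<omega>. snd \<omega> i * fst \<omega>) = EE (\<lambda>\<omega>. aligned i \<omega>)"
    and "EE (\<lambda>\<omega>. snd \<omega> j * fst \<omega>) = EE (\<lambda>\<omega>. aligned j \<omega>)"
    by (simp_all add: aligned_def mult.commute)
  ultimately have "eps = 4 * (exp (2 * tij) - exp (- 2 * tij)) / z\<^sup>2"
    unfolding eps_def moments[of "\<lambda>a b. a * b"] moments[of "\<lambda>a b. a"] moments[of "\<lambda>a b. b"]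
    using spin_pair_covariance[of ?g] pair_weight_cross_difference[of "th i" "th j" tij]
    unfolding z_eq by simp
  moreover have "Dij - Di * aj - Dj * ai - Di * Dj = 4 * (exp (2 * tij) - exp (- 2 * tij)) / z\<^sup>2"
    unfolding Dij_def Di_def Dj_def ai_def aj_def z_def z'_def by (rule pair_covariance_closed_form)
  ultimately show ?thesis
    \<comment> \<open>only theta_ij > 0 is needed for the bounds\<close>
    using pair_covariance_bounds[of tij "th i" "th j"] unfolding z_eq by simp
qed

end
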